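(* Let $0<\epsilon<1$ and let $(G,\lambda^\mu),(G,\lambda^\nu)$ be two hardcore models on $G=(V,E)$, $n=|V|$, with Gibbs distributions $\mu,\nu$, both satisfying the uniqueness condition with constant gap $\eta$, and with $D:=d_{\mathrm{par}}(\mu,\nu)<\theta:=10^{-10}\frac{\epsilon^{1/4}}{n^{5/2}}$. Let $d=d_{TV}(\mu,\nu)$, $\kappa=10^{-9}\frac{\epsilon^{1/4}}{n^{3/2}}$, $B=\{v\in V:\min\{\lambda^\mu_v,\lambda^\nu_v\}\ge\kappa\}$, $S=V\setminus B$, and let $\Omega_B\subseteq\{\pm1\}^B$ be the support of both $\mu_B$ and $\nu_B$. Define $f:\Omega_B\to\mathbb{R}$ by $$f(x)=\frac12\sum_{y\in\{\pm1\}^S}\left|\frac{\nu_B(x)}{\mu_B(x)}\nu^x_S(y)-\mu^x_S(y)\right|.$$ Then $\mathrm{Var}_{x\sim\mu_B}[f(x)]=O_\eta(d^2)\cdot(n^3+n/\kappa)$, where $O_\eta$ hides a constant depending only on $\eta$.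
   Context: Hardcore model $(G,\lambda)$: weight on $\sigma\in\{-1,+1\}^V$ is $\prod_{v:\sigma_v=+1}\lambda_v$ if $\{v:\sigma_v=+1\}$ is independent, else $0$; Gibbs distribution is the normalized weight. Uniqueness condition with gap $\eta\in(0,1)$: $\lambda_v\le(1-\eta)\frac{(\Delta-1)^{\Delta-1}}{(\Delta-2)^\Delta}$ for all $v$, with $\Delta\ge3$ the maximum degree. $d_{\mathrm{par}}(\mu,\nu)=\max_v|\lambda^\mu_v-\lambda^\nu_v|$. $\mu_B$ is the marginal of $\mu$ on $B$, and $\mu^x_S$ is the distribution on $\{\pm1\}^S$ of $\mu$ conditioned on the configuration $x$ on $B$ (similarly for $\nu$). *)

theory Defs
  imports Complex_Main "HOL-Library.FuncSet"
begin

definition simple_graph :: "'a set \<Rightarrow> ('a \<Rightarrow> 'a \<Rightarrow> bool) \<Rightarrow> bool" where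
  "simple_graph V E \<longleftrightarrow> finite V \<and> (\<forall>u v. E u v \<longrightarrow> u \<in> V \<and> v \<in> V \<and> u \<noteq> v \<and> E v u)"

definition degree :: "'a set \<Rightarrow> ('a \<Rightarrow> 'a \<Rightarrow> bool) \<Rightarrow> 'a \<Rightarrow> nat" where
  "degree V E v = card {u \<in> V. E v u}"

definition max_degree :: "'a set \<Rightarrow> ('a \<Rightarrow> 'a \<Rightarrow> bool) \<Rightarrow> nat" where
  "max_degree V E = Max (degree V E ` V)"

definition configs :: "'a set \<Rightarrow> ('a \<Rightarrow> int) set" where
  "configs A = PiE A (\<lambda>_. {-1, 1})"

definition independent :: "('a \<Rightarrow> 'a \<Rightarrow> bool) \<Rightarrow> 'a set \<Rightarrow> bool" where
  "independent E A \<longleftrightarrow> (\<forall>u\<in>A. \<forall>v\<in>A. \<not> E u v)"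

definition hc_weight :: "'a set \<Rightarrow> ('a \<Rightarrow> 'a \<Rightarrow> bool) \<Rightarrow> ('a \<Rightarrow> real) \<Rightarrow> ('a \<Rightarrow> int) \<Rightarrow> real" where
  "hc_weight V E lam \<sigma> =
     (if independent E {v \<in> V. \<sigma> v = 1} then (\<Prod>v \<in> {v \<in> V. \<sigma> v = 1}. lam v) else 0)"

definition hc_Z :: "'a set \<Rightarrow> ('a \<Rightarrow> 'a \<Rightarrow> bool) \<Rightarrow> ('a \<Rightarrow> real) \<Rightarrow> real" where
  "hc_Z V E lam = (\<Sum>\<sigma> \<in> configs V. hc_weight V E lam \<sigma>)"

definition gibbs :: "'a set \<Rightarrow> ('a \<Rightarrow> 'a \<Rightarrow> bool) \<Rightarrow> ('a \<Rightarrow> real) \<Rightarrow> ('a \<Rightarrow> int) \<Rightarrow> real" where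
  "gibbs V E lam \<sigma> = hc_weight V E lam \<sigma> / hc_Z V E lam"

definition marginal :: "'a set \<Rightarrow> (('a \<Rightarrow> int) \<Rightarrow> real) \<Rightarrow> 'a set \<Rightarrow> ('a \<Rightarrow> int) \<Rightarrow> real" where
  "marginal V p B x = (\<Sum>\<sigma> \<in> {\<sigma> \<in> configs V. restrict \<sigma> B = x}. p \<sigma>)"

definition conditional :: "'a set \<Rightarrow> (('a \<Rightarrow> int) \<Rightarrow> real) \<Rightarrow> 'a set \<Rightarrow> ('a \<Rightarrow> int) \<Rightarrow> ('a \<Rightarrow> int) \<Rightarrow> real" where
  "conditional V p B x y = p (\<lambda>v. if v \<in> B then x v else y v) / marginal V p B x"

definition d_TV :: "'a set \<Rightarrow> (('a \<Rightarrow> int) \<Rightarrow> real) \<Rightarrow> (('a \<Rightarrow> int) \<Rightarrow> real) \<Rightarrow> real" where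
  "d_TV V p q = (1/2) * (\<Sum>\<sigma> \<in> configs V. \<bar>p \<sigma> - q \<sigma>\<bar>)"

definition d_par :: "'a set \<Rightarrow> ('a \<Rightarrow> real) \<Rightarrow> ('a \<Rightarrow> real) \<Rightarrow> real" where
  "d_par V l1 l2 = Max ((\<lambda>v. \<bar>l1 v - l2 v\<bar>) ` V)"

text \<open>Uniqueness condition with gap eta (Delta = max degree, assumed \<ge> 3).\<close>
definition uniqueness :: "'a set \<Rightarrow> ('a \<Rightarrow> 'a \<Rightarrow> bool) \<Rightarrow> ('a \<Rightarrow> real) \<Rightarrow> real \<Rightarrow> bool" where
  "uniqueness V E lam \<eta> \<longleftrightarrow>
     (let \<Delta> = real (max_degree V E) in
      \<forall>v \<in> V. lam v \<le> (1 - \<eta>) * (\<Delta> - 1) ^ (max_degree V E - 1) / (\<Delta> - 2) ^ (max_degree V E))"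

end

(*
  Encode a configuration by its set of occupied vertices.  For an occupied set X of B and Y of
  S = V - B, the likelihood ratio of the two Gibbs measures is
  nu/mu = (Z_mu / Z_nu) * prod_X rho * prod_Y rho  with  rho = lam_nu / lam_mu.
  On B the fugacities are at least kappa, so prod_X rho is within 2 * sum_X |rho - 1| of 1.
  On S nothing is known about rho, but raising fugacities by at most D changes every partial
  partition function by at most the factor (1 + D)^n, so the Y-factor is 1 + O(nD) on average.
  Hence f(X) = |Z_mu / Z_nu - 1| / 2 + O(sum_X |rho - 1| + nD), and the variance of f is at most
  its mean square deviation from this constant, which is O(D^2 (n / kappa + n^2)) because a pair
  u, w is occupied with probability at most lam_u * lam_w.

  Finally D = O(d_TV): at a vertex v where |lam_mu v - lam_nu v| = D, the events "no neighbour of v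
  is occupied" and "v is occupied and no neighbour is" have probabilities in the ratio
  lam_v / (1 + lam_v) under either measure, and the first one has probability at least
  prod_{N(v)} (1 + lam)^-1 >= exp (-27).  The constant is absolute: the uniqueness condition alone
  forces every fugacity below e^2 / (Delta - 2) <= 9, whatever eta is.
*)
theory Submission
  imports Defs "HOL-Analysis.Infinite_Products"
begin

section \<open>Weights of independent sets\<close>

definition indep_weight :: "('a \<Rightarrow> 'a \<Rightarrow> bool) \<Rightarrow> ('a \<Rightarrow> real) \<Rightarrow> 'a set \<Rightarrow> real" where
  "indep_weight E lam A = (if independent E A then prod lam A else 0)"

lemma independent_subset: "independent E A \<Longrightarrow> C \<subseteq> A \<Longrightarrow> independent E C"
  unfolding independent_def by blast

lemma indep_weight_empty [simp]: "indep_weight E lam {} = 1"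
  unfolding indep_weight_def independent_def by simp

lemma indep_weight_nonneg: "(\<And>v. v \<in> A \<Longrightarrow> 0 \<le> lam v) \<Longrightarrow> 0 \<le> indep_weight E lam A"
  unfolding indep_weight_def by (auto intro: prod_nonneg)

lemma indep_weight_le_prod_mult_diff:
  assumes "C \<subseteq> A" "finite A" "\<And>v. v \<in> A \<Longrightarrow> 0 \<le> lam v"
  shows "indep_weight E lam A \<le> prod lam C * indep_weight E lam (A - C)"
proof (cases "independent E A")
  case True
  then have "independent E (A - C)" using independent_subset by blast
  moreover have "prod lam A = prod lam C * prod lam (A - C)"
    using prod.subset_diff[OF assms(1,2)] by (simp add: mult.commute)
  ultimately show ?thesis using True by (simp add: indep_weight_def)
next
  case False
  have "0 \<le> prod lam C * indep_weight E lam (A - C)"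
    using assms by (auto intro!: mult_nonneg_nonneg prod_nonneg indep_weight_nonneg)
  then show ?thesis using False by (simp add: indep_weight_def)
qed

lemma indep_weight_reweight:
  assumes "finite X" "finite Y" "X \<inter> Y = {}" "\<And>v. v \<in> Y \<Longrightarrow> lam v \<noteq> 0"
    "\<And>v. v \<in> X \<Longrightarrow> lam' v = lam v" "\<And>v. v \<in> Y \<Longrightarrow> lam' v = h v"
  shows "indep_weight E lam (X \<union> Y) * (\<Prod>v\<in>Y. h v / lam v) = indep_weight E lam' (X \<union> Y)"
proof (cases "independent E (X \<union> Y)")
  case True
  have "prod lam (X \<union> Y) * (\<Prod>v\<in>Y. h v / lam v) = prod lam X * (prod lam Y * (\<Prod>v\<in>Y. h v / lam v))"
    using prod.union_disjoint[OF assms(1-3), of lam] by (simp add: mult.assoc)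
  also have "prod lam Y * (\<Prod>v\<in>Y. h v / lam v) = (\<Prod>v\<in>Y. lam v * (h v / lam v))"
    by (simp only: prod.distrib)
  also have "\<dots> = prod lam' Y" using assms(4,6) by (intro prod.cong) auto
  also have "prod lam X = prod lam' X" using assms(5) by (intro prod.cong) auto
  also have "prod lam' X * prod lam' Y = prod lam' (X \<union> Y)"
    using prod.union_disjoint[OF assms(1-3), of lam'] by simp
  finally show ?thesis using True unfolding indep_weight_def by simp
qed (simp add: indep_weight_def)

lemma indep_weight_increase_le:
  fixes d :: real
  assumes "finite X" "finite Y" "X \<inter> Y = {}" "0 \<le> d"
    and "\<And>v. v \<in> Y \<Longrightarrow> 0 \<le> lam v \<and> 0 \<le> lam' v \<and> lam' v \<le> lam v + d"
    and "\<And>v. v \<in> X \<Longrightarrow> lam' v = lam v \<and> 0 \<le> lam v"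
  shows "indep_weight E lam' (X \<union> Y) \<le> (\<Sum>C\<in>Pow Y. d ^ card C * indep_weight E lam (X \<union> (Y - C)))"
proof (cases "independent E (X \<union> Y)")
  case True
  have "indep_weight E lam' (X \<union> Y) = prod lam X * prod lam' Y"
    using True prod.union_disjoint[OF assms(1-3), of lam'] assms(6)
    by (simp add: indep_weight_def cong: prod.cong)
  also have "\<dots> \<le> prod lam X * (\<Prod>v\<in>Y. d + lam v)"
    using assms(5,6) by (intro mult_left_mono prod_mono prod_nonneg) (auto simp: add.commute)
  also have "\<dots> = (\<Sum>C\<in>Pow Y. d ^ card C * (prod lam X * prod lam (Y - C)))"
    by (simp add: prod_add[OF assms(2)] sum_distrib_left mult.left_commute)
  also have "\<dots> = (\<Sum>C\<in>Pow Y. d ^ card C * indep_weight E lam (X \<union> (Y - C)))"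
  proof (rule sum.cong)
    fix C assume "C \<in> Pow Y"
    have "independent E (X \<union> (Y - C))" by (rule independent_subset[OF True]) blast
    moreover have "prod lam (X \<union> (Y - C)) = prod lam X * prod lam (Y - C)"
      using assms(1-3) by (intro prod.union_disjoint) auto
    ultimately show "d ^ card C * (prod lam X * prod lam (Y - C)) = d ^ card C * indep_weight E lam (X \<union> (Y - C))"
      unfolding indep_weight_def by simp
  qed simp
  finally show ?thesis .
next
  case False
  have "0 \<le> (\<Sum>C\<in>Pow Y. d ^ card C * indep_weight E lam (X \<union> (Y - C)))"
    using assms(4-6) by (intro sum_nonneg mult_nonneg_nonneg indep_weight_nonneg) auto
  then show ?thesis using False unfolding indep_weight_def by simp
qed

text \<open>Summing the expansion of \<open>indep_weight_increase_le\<close> over \<open>Y\<close>, every set arises as \<open>Y - C\<close>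
  at most once for each \<open>C\<close>, and \<open>(\<Sum>C\<in>Pow S. d ^ card C) = (1 + d) ^ card S\<close>.\<close>
lemma sum_indep_weight_increase_le:
  fixes d :: real
  assumes "finite X" "finite S" "X \<inter> S = {}" "0 \<le> d"
    and "\<And>v. v \<in> S \<Longrightarrow> 0 \<le> lam v \<and> 0 \<le> lam' v \<and> lam' v \<le> lam v + d"
    and "\<And>v. v \<in> X \<Longrightarrow> lam' v = lam v \<and> 0 \<le> lam v"
  shows "(\<Sum>Y\<in>Pow S. indep_weight E lam' (X \<union> Y)) \<le> (1 + d) ^ card S * (\<Sum>Y\<in>Pow S. indep_weight E lam (X \<union> Y))"
proof -
  let ?w = "\<lambda>Y. indep_weight E lam (X \<union> Y)"
  have shifted_le: "(\<Sum>Y\<in>{Y\<in>Pow S. C \<subseteq> Y}. ?w (Y - C)) \<le> (\<Sum>Y\<in>Pow S. ?w Y)" for C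
  proof -
    have "(\<Sum>Y\<in>{Y\<in>Pow S. C \<subseteq> Y}. ?w (Y - C)) = (\<Sum>Y\<in>(\<lambda>Y. Y - C) ` {Y\<in>Pow S. C \<subseteq> Y}. ?w Y)"
      by (rule sum.reindex[symmetric, unfolded comp_def]) (rule inj_onI, blast)
    also have "\<dots> \<le> (\<Sum>Y\<in>Pow S. ?w Y)"
      using assms(2,5,6) by (intro sum_mono2 indep_weight_nonneg) auto
    finally show ?thesis .
  qed
  have "(\<Sum>Y\<in>Pow S. indep_weight E lam' (X \<union> Y)) \<le> (\<Sum>Y\<in>Pow S. \<Sum>C\<in>{C\<in>Pow S. C \<subseteq> Y}. d ^ card C * ?w (Y - C))"
  proof (rule sum_mono)
    fix Y assume Y: "Y \<in> Pow S"
    then have "finite Y" "X \<inter> Y = {}" using assms(2,3) by (auto intro: finite_subset)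
    with Y have "indep_weight E lam' (X \<union> Y) \<le> (\<Sum>C\<in>Pow Y. d ^ card C * ?w (Y - C))"
      using assms by (intro indep_weight_increase_le) auto
    also have "Pow Y = {C\<in>Pow S. C \<subseteq> Y}" using Y by auto
    finally show "indep_weight E lam' (X \<union> Y) \<le> (\<Sum>C\<in>{C\<in>Pow S. C \<subseteq> Y}. d ^ card C * ?w (Y - C))" .
  qed
  also have "\<dots> = (\<Sum>C\<in>Pow S. d ^ card C * (\<Sum>Y\<in>{Y\<in>Pow S. C \<subseteq> Y}. ?w (Y - C)))"
    using sum.swap_restrict[of "Pow S" "Pow S" "\<lambda>Y C. d ^ card C * ?w (Y - C)" "\<lambda>Y C. C \<subseteq> Y"] assms(2)
    by (simp add: sum_distrib_left)
  also have "\<dots> \<le> (\<Sum>C\<in>Pow S. d ^ card C * (\<Sum>Y\<in>Pow S. ?w Y))"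
    using assms(4) by (intro sum_mono mult_left_mono shifted_le) simp
  also have "\<dots> = (1 + d) ^ card S * (\<Sum>Y\<in>Pow S. ?w Y)"
    using prod_add[OF assms(2), of "\<lambda>_. d" "\<lambda>_. 1"] by (simp add: sum_distrib_right add.commute)
  finally show ?thesis .
qed

section \<open>Configurations as occupied sets\<close>

definition config_of :: "'a set \<Rightarrow> 'a set \<Rightarrow> 'a \<Rightarrow> int" where
  "config_of U A = (\<lambda>v. if v \<in> U then if v \<in> A then 1 else -1 else undefined)"

lemma bij_betw_config_of: "bij_betw (config_of U) (Pow U) (configs U)"
proof (rule bij_betw_byWitness[where f' = "\<lambda>\<sigma>. {v \<in> U. \<sigma> v = 1}"])
  show "\<forall>\<sigma>\<in>configs U. config_of U {v \<in> U. \<sigma> v = 1} = \<sigma>"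
  proof
    fix \<sigma> assume "\<sigma> \<in> configs U"
    then have "\<sigma> v \<in> {-1, 1}" if "v \<in> U" for v
      using that by (auto simp: configs_def)
    with \<open>\<sigma> \<in> configs U\<close> show "config_of U {v \<in> U. \<sigma> v = 1} = \<sigma>"
      by (force simp: config_of_def configs_def PiE_def extensional_def)
  qed
qed (auto simp: config_of_def configs_def split: if_splits)

lemma sum_configs_eq_sum_Pow: "(\<Sum>\<sigma>\<in>configs U. g \<sigma>) = (\<Sum>A\<in>Pow U. g (config_of U A))"
  by (rule sum.reindex_bij_betw[OF bij_betw_config_of, symmetric])

lemma hc_weight_config_of: "A \<subseteq> V \<Longrightarrow> hc_weight V E lam (config_of V A) = indep_weight E lam A"
  unfolding hc_weight_def indep_weight_def config_of_def
  by (simp add: Int_absorb1[unfolded Int_def] conj_commute subset_iff Collect_mem_eq)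

lemma hc_Z_eq_sum_indep_weight: "hc_Z V E lam = (\<Sum>A\<in>Pow V. indep_weight E lam A)"
  unfolding hc_Z_def sum_configs_eq_sum_Pow by (auto intro: sum.cong simp: hc_weight_config_of)

definition hc_prob :: "'a set \<Rightarrow> ('a \<Rightarrow> 'a \<Rightarrow> bool) \<Rightarrow> ('a \<Rightarrow> real) \<Rightarrow> 'a set \<Rightarrow> real" where
  "hc_prob V E lam A = indep_weight E lam A / hc_Z V E lam"

definition hc_marginal :: "'a set \<Rightarrow> ('a \<Rightarrow> 'a \<Rightarrow> bool) \<Rightarrow> ('a \<Rightarrow> real) \<Rightarrow> 'a set \<Rightarrow> 'a set \<Rightarrow> real" where
  "hc_marginal V E lam B X = (\<Sum>Y\<in>Pow (V - B). hc_prob V E lam (X \<union> Y))"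

lemma gibbs_config_of: "A \<subseteq> V \<Longrightarrow> gibbs V E lam (config_of V A) = hc_prob V E lam A"
  by (simp add: gibbs_def hc_prob_def hc_weight_config_of hc_Z_eq_sum_indep_weight)

lemma restrict_config_of: "B \<subseteq> V \<Longrightarrow> restrict (config_of V A) B = config_of B (A \<inter> B)"
  unfolding config_of_def restrict_def by (rule ext) auto

lemma merge_config_of:
  "B \<subseteq> V \<Longrightarrow> X \<subseteq> B \<Longrightarrow> Y \<subseteq> V - B \<Longrightarrow>
   (\<lambda>v. if v \<in> B then config_of B X v else config_of (V - B) Y v) = config_of V (X \<union> Y)"
  unfolding config_of_def by (rule ext) auto

lemma marginal_config_of:
  assumes "B \<subseteq> V" "X \<subseteq> B"
  shows "marginal V p B (config_of B X) = (\<Sum>Y\<in>Pow (V - B). p (config_of V (X \<union> Y)))"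
proof -
  have restrict_eq_iff: "restrict (config_of V A) B = config_of B X \<longleftrightarrow> A \<inter> B = X" for A
    using bij_betw_imp_inj_on[OF bij_betw_config_of, of B] assms
    by (auto simp: restrict_config_of[OF assms(1)] dest: inj_onD)
  have "{\<sigma> \<in> configs V. restrict \<sigma> B = config_of B X} = config_of V ` {A \<in> Pow V. A \<inter> B = X}"
    unfolding bij_betw_imp_surj_on[OF bij_betw_config_of, of V, symmetric]
    using restrict_eq_iff by blast
  moreover have "inj_on (config_of V) {A \<in> Pow V. A \<inter> B = X}"
    by (rule inj_on_subset[OF bij_betw_imp_inj_on[OF bij_betw_config_of]]) auto
  ultimately have "marginal V p B (config_of B X) = (\<Sum>A\<in>{A \<in> Pow V. A \<inter> B = X}. p (config_of V A))"
    unfolding marginal_def by (simp add: sum.reindex)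
  also have "\<dots> = (\<Sum>Y\<in>Pow (V - B). p (config_of V (X \<union> Y)))"
    by (rule sum.reindex_bij_witness[where i = "\<lambda>Y. X \<union> Y" and j = "\<lambda>A. A - B"])
      (use assms in \<open>auto simp: Int_Diff_Un\<close>)
  finally show ?thesis .
qed

lemma conditional_config_of:
  "B \<subseteq> V \<Longrightarrow> X \<subseteq> B \<Longrightarrow> Y \<subseteq> V - B \<Longrightarrow>
   conditional V p B (config_of B X) (config_of (V - B) Y)
     = p (config_of V (X \<union> Y)) / marginal V p B (config_of B X)"
  by (simp add: conditional_def merge_config_of)

lemma marginal_gibbs_config_of:
  "B \<subseteq> V \<Longrightarrow> X \<subseteq> B \<Longrightarrow> marginal V (gibbs V E lam) B (config_of B X) = hc_marginal V E lam B X"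
  unfolding marginal_config_of hc_marginal_def by (auto intro!: sum.cong gibbs_config_of)

lemma conditional_gibbs_config_of:
  assumes "B \<subseteq> V" "X \<subseteq> B" "Y \<subseteq> V - B"
  shows "conditional V (gibbs V E lam) B (config_of B X) (config_of (V - B) Y)
     = hc_prob V E lam (X \<union> Y) / hc_marginal V E lam B X"
proof -
  have "X \<union> Y \<subseteq> V" using assms by blast
  with assms show ?thesis
    by (simp add: conditional_config_of marginal_gibbs_config_of gibbs_config_of)
qed

section \<open>Partition functions and probabilities of occupied sets\<close>

lemma sum_Pow_union:
  assumes "finite B" "finite S" "B \<inter> S = {}"
  shows "(\<Sum>A\<in>Pow (B \<union> S). g A) = (\<Sum>X\<in>Pow B. \<Sum>Y\<in>Pow S. g (X \<union> Y))"
proof -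
  have "(\<Sum>X\<in>Pow B. \<Sum>Y\<in>Pow S. g (X \<union> Y)) = (\<Sum>(X, Y)\<in>Pow B \<times> Pow S. g (X \<union> Y))"
    by (simp add: sum.cartesian_product)
  also have "\<dots> = (\<Sum>A\<in>Pow (B \<union> S). g A)"
    by (rule sum.reindex_bij_witness[where i = "\<lambda>A. (A \<inter> B, A \<inter> S)" and j = "\<lambda>(X, Y). X \<union> Y"])
      (use assms(3) in auto)
  finally show ?thesis by simp
qed

lemma hc_Z_pos:
  assumes "finite V" "\<And>v. v \<in> V \<Longrightarrow> 0 \<le> lam v"
  shows "0 < hc_Z V E lam"
proof -
  have "indep_weight E lam {} \<le> (\<Sum>A\<in>Pow V. indep_weight E lam A)"
    using assms by (intro member_le_sum indep_weight_nonneg) auto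
  then show ?thesis by (simp add: hc_Z_eq_sum_indep_weight)
qed

lemma hc_prob_nonneg:
  assumes "finite V" "\<And>v. v \<in> V \<Longrightarrow> 0 \<le> lam v" "A \<subseteq> V"
  shows "0 \<le> hc_prob V E lam A"
  using hc_Z_pos[OF assms(1,2)] assms(2,3)
  by (auto simp: hc_prob_def intro!: divide_nonneg_pos indep_weight_nonneg)

lemma sum_hc_prob:
  assumes "finite V" "\<And>v. v \<in> V \<Longrightarrow> 0 \<le> lam v"
  shows "(\<Sum>A\<in>Pow V. hc_prob V E lam A) = 1"
  using hc_Z_pos[of V lam E] assms
  by (simp add: hc_prob_def hc_Z_eq_sum_indep_weight flip: sum_divide_distrib)

lemma sum_hc_marginal_mult:
  assumes "finite V" "B \<subseteq> V"
  shows "(\<Sum>X\<in>Pow B. hc_marginal V E lam B X * g X) = (\<Sum>A\<in>Pow V. hc_prob V E lam A * g (A \<inter> B))"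
proof -
  have "(\<Sum>X\<in>Pow B. hc_marginal V E lam B X * g X)
      = (\<Sum>X\<in>Pow B. \<Sum>Y\<in>Pow (V - B). hc_prob V E lam (X \<union> Y) * g ((X \<union> Y) \<inter> B))"
  proof (rule sum.cong)
    fix X assume "X \<in> Pow B"
    then have "(X \<union> Y) \<inter> B = X" if "Y \<in> Pow (V - B)" for Y using that by blast
    then show "hc_marginal V E lam B X * g X = (\<Sum>Y\<in>Pow (V - B). hc_prob V E lam (X \<union> Y) * g ((X \<union> Y) \<inter> B))"
      by (simp add: hc_marginal_def sum_distrib_right)
  qed simp
  also have "\<dots> = (\<Sum>A\<in>Pow (B \<union> (V - B)). hc_prob V E lam A * g (A \<inter> B))"
    using assms by (intro sum_Pow_union[symmetric]) (auto intro: finite_subset)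
  also have "B \<union> (V - B) = V" using assms(2) by blast
  finally show ?thesis .
qed

lemma sum_indep_weight_supersets_le:
  assumes "finite V" "C \<subseteq> V" "\<And>v. v \<in> V \<Longrightarrow> 0 \<le> lam v"
  shows "(\<Sum>A\<in>{A\<in>Pow V. C \<subseteq> A}. indep_weight E lam A) \<le> prod lam C * hc_Z V E lam"
proof -
  have "(\<Sum>A\<in>{A\<in>Pow V. C \<subseteq> A}. indep_weight E lam A)
      \<le> (\<Sum>A\<in>{A\<in>Pow V. C \<subseteq> A}. prod lam C * indep_weight E lam (A - C))"
    using assms by (intro sum_mono indep_weight_le_prod_mult_diff) (auto intro: finite_subset)
  also have "\<dots> = prod lam C * (\<Sum>A\<in>(\<lambda>A. A - C) ` {A\<in>Pow V. C \<subseteq> A}. indep_weight E lam A)"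
    by (subst sum.reindex) (auto intro!: inj_onI simp: sum_distrib_left)
  also have "\<dots> \<le> prod lam C * hc_Z V E lam"
    unfolding hc_Z_eq_sum_indep_weight using assms
    by (intro mult_left_mono sum_mono2 indep_weight_nonneg prod_nonneg) auto
  finally show ?thesis .
qed

lemma hc_Z_le_prod_mult_sum_avoiding:
  assumes "finite V" "N \<subseteq> V" "\<And>v. v \<in> V \<Longrightarrow> 0 \<le> lam v"
  shows "hc_Z V E lam \<le> (\<Prod>v\<in>N. 1 + lam v) * (\<Sum>A\<in>Pow (V - N). indep_weight E lam A)"
proof -
  have fin: "finite N" "finite (V - N)" using assms(1,2) by (auto intro: finite_subset)
  have "hc_Z V E lam = (\<Sum>A\<in>Pow ((V - N) \<union> N). indep_weight E lam A)"
    unfolding hc_Z_eq_sum_indep_weight using assms(2) by (simp add: Un_absorb2)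
  also have "\<dots> = (\<Sum>X\<in>Pow (V - N). \<Sum>Y\<in>Pow N. indep_weight E lam (X \<union> Y))"
    by (rule sum_Pow_union) (use fin in auto)
  also have "\<dots> \<le> (\<Sum>X\<in>Pow (V - N). \<Sum>Y\<in>Pow N. prod lam Y * indep_weight E lam X)"
  proof (intro sum_mono)
    fix X Y assume "X \<in> Pow (V - N)" "Y \<in> Pow N"
    then have XY: "X \<union> Y - Y = X" "X \<union> Y \<subseteq> V" using assms(2) by auto
    have "indep_weight E lam (X \<union> Y) \<le> prod lam Y * indep_weight E lam (X \<union> Y - Y)"
      using XY(2) assms(3) finite_subset[OF XY(2) assms(1)]
      by (intro indep_weight_le_prod_mult_diff) auto
    then show "indep_weight E lam (X \<union> Y) \<le> prod lam Y * indep_weight E lam X"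
      by (simp only: XY(1))
  qed
  also have "\<dots> = (\<Sum>X\<in>Pow (V - N). (\<Sum>Y\<in>Pow N. prod lam Y) * indep_weight E lam X)"
    by (simp add: sum_distrib_right)
  also have "(\<Sum>Y\<in>Pow N. prod lam Y) = (\<Prod>v\<in>N. 1 + lam v)"
    using prod_add[OF fin(1), of lam "\<lambda>_. 1"] by (simp add: add.commute)
  also have "(\<Sum>X\<in>Pow (V - N). (\<Prod>v\<in>N. 1 + lam v) * indep_weight E lam X)
      = (\<Prod>v\<in>N. 1 + lam v) * (\<Sum>A\<in>Pow (V - N). indep_weight E lam A)"
    by (simp add: sum_distrib_left)
  finally show ?thesis .
qed

lemma indep_weight_insert_nonadjacent:
  assumes "simple_graph V E" "finite A" "v \<notin> A" "\<And>u. u \<in> A \<Longrightarrow> \<not> E v u"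
  shows "indep_weight E lam (insert v A) = lam v * indep_weight E lam A"
proof -
  have "independent E (insert v A) \<longleftrightarrow> independent E A"
    using assms(1,4) unfolding independent_def simple_graph_def by blast
  then show ?thesis using assms(2,3) by (simp add: indep_weight_def)
qed

lemma hc_prob_occupied_avoiding_neighbours:
  assumes "simple_graph V E" "v \<in> V" "\<And>u. u \<in> V \<Longrightarrow> 0 \<le> lam u"
  defines "N \<equiv> {u \<in> V. E v u}"
  shows "(\<Sum>A\<in>{A\<in>Pow (V - N). v \<in> A}. hc_prob V E lam A)
       = lam v / (1 + lam v) * (\<Sum>A\<in>Pow (V - N). hc_prob V E lam A)"
proof -
  have fin: "finite V" using assms(1) by (simp add: simple_graph_def)
  have v_free: "v \<in> V - N" using assms(1,2) by (auto simp: N_def simple_graph_def)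
  let ?w = "indep_weight E lam"
  let ?occ = "\<Sum>A\<in>{A\<in>Pow (V - N). v \<in> A}. ?w A" and ?unocc = "\<Sum>A\<in>{A\<in>Pow (V - N). v \<notin> A}. ?w A"
  have "?occ = (\<Sum>A\<in>{A\<in>Pow (V - N). v \<notin> A}. ?w (insert v A))"
    by (rule sum.reindex_bij_witness[where i = "insert v" and j = "\<lambda>A. A - {v}"]) (use v_free in \<open>auto simp: insert_absorb\<close>)
  also have "\<dots> = lam v * ?unocc"
    unfolding sum_distrib_left
  proof (rule sum.cong)
    fix A assume "A \<in> {A\<in>Pow (V - N). v \<notin> A}"
    with fin show "?w (insert v A) = lam v * ?w A"
      by (intro indep_weight_insert_nonadjacent[OF assms(1)]) (auto simp: N_def intro: finite_subset)
  qed simp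
  finally have occ: "?occ = lam v * ?unocc" .
  have "(\<Sum>A\<in>Pow (V - N). ?w A) = (\<Sum>A\<in>{A\<in>Pow (V - N). v \<in> A} \<union> {A\<in>Pow (V - N). v \<notin> A}. ?w A)"
    by (rule sum.cong) auto
  also have "\<dots> = ?occ + ?unocc" using fin by (intro sum.union_disjoint) auto
  finally have "?occ * (1 + lam v) = lam v * (\<Sum>A\<in>Pow (V - N). ?w A)"
    using occ by (simp add: algebra_simps)
  moreover have "0 < 1 + lam v" using assms(2,3) by (simp add: add_pos_nonneg)
  ultimately have "?occ = lam v / (1 + lam v) * (\<Sum>A\<in>Pow (V - N). ?w A)"
    by (simp add: field_simps)
  then show ?thesis unfolding hc_prob_def sum_divide_distrib[symmetric] by simp
qed

lemma hc_prob_avoiding_ge: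
  assumes "finite V" "N \<subseteq> V" "\<And>u. u \<in> V \<Longrightarrow> 0 \<le> lam u"
  shows "1 / (\<Prod>u\<in>N. 1 + lam u) \<le> (\<Sum>A\<in>Pow (V - N). hc_prob V E lam A)"
proof -
  let ?P = "\<Prod>u\<in>N. 1 + lam u" and ?W = "\<Sum>A\<in>Pow (V - N). indep_weight E lam A"
  have "0 < ?P" using assms by (intro prod_pos) (auto simp: add_pos_nonneg)
  moreover have "0 < hc_Z V E lam" by (rule hc_Z_pos[OF assms(1,3)])
  moreover have "hc_Z V E lam \<le> ?P * ?W" by (rule hc_Z_le_prod_mult_sum_avoiding[OF assms])
  ultimately have "1 / ?P \<le> ?W / hc_Z V E lam" by (simp add: divide_simps mult.commute)
  then show ?thesis by (simp add: hc_prob_def sum_divide_distrib)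
qed

lemma d_TV_gibbs_eq:
  "d_TV V (gibbs V E lmu) (gibbs V E lnu) = (1/2) * (\<Sum>A\<in>Pow V. \<bar>hc_prob V E lmu A - hc_prob V E lnu A\<bar>)"
  unfolding d_TV_def sum_configs_eq_sum_Pow by (simp add: gibbs_config_of)

lemma abs_sum_hc_prob_diff_le_d_TV:
  assumes "finite V" "F \<subseteq> Pow V"
  shows "\<bar>(\<Sum>A\<in>F. hc_prob V E lmu A) - (\<Sum>A\<in>F. hc_prob V E lnu A)\<bar>
       \<le> 2 * d_TV V (gibbs V E lmu) (gibbs V E lnu)"
proof -
  have "\<bar>(\<Sum>A\<in>F. hc_prob V E lmu A) - (\<Sum>A\<in>F. hc_prob V E lnu A)\<bar> \<le> (\<Sum>A\<in>F. \<bar>hc_prob V E lmu A - hc_prob V E lnu A\<bar>)"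
    by (simp add: sum_abs flip: sum_subtractf)
  also have "\<dots> \<le> (\<Sum>A\<in>Pow V. \<bar>hc_prob V E lmu A - hc_prob V E lnu A\<bar>)"
    using assms by (intro sum_mono2) auto
  finally show ?thesis by (simp add: d_TV_gibbs_eq)
qed

lemma abs_prod_one_plus_le:
  fixes a :: "'a \<Rightarrow> real"
  shows "\<bar>\<Prod>v\<in>Y. 1 + a v\<bar> \<le> (\<Prod>v\<in>Y. 1 + \<bar>a v\<bar>)"
  by (induction Y rule: infinite_finite_induct) (auto simp: abs_mult intro!: mult_mono)

lemma abs_prod_one_plus_sub_one_le:
  fixes a :: "'a \<Rightarrow> real"
  shows "\<bar>(\<Prod>v\<in>Y. 1 + a v) - 1\<bar> \<le> (\<Prod>v\<in>Y. 1 + \<bar>a v\<bar>) - 1"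
proof (induction Y rule: infinite_finite_induct)
  case (insert x F)
  let ?P = "\<Prod>v\<in>F. 1 + a v" and ?Q = "\<Prod>v\<in>F. 1 + \<bar>a v\<bar>"
  have "\<bar>(1 + a x) * ?P - 1\<bar> = \<bar>(?P - 1) + a x * ?P\<bar>" by (simp add: algebra_simps)
  also have "\<dots> \<le> \<bar>?P - 1\<bar> + \<bar>a x\<bar> * \<bar>?P\<bar>" by (simp add: abs_mult abs_triangle_ineq[THEN order_trans])
  also have "\<dots> \<le> (?Q - 1) + \<bar>a x\<bar> * ?Q"
    by (rule add_mono[OF insert.IH mult_left_mono[OF abs_prod_one_plus_le]]) simp
  also have "\<dots> = (1 + \<bar>a x\<bar>) * ?Q - 1" by (simp add: algebra_simps)
  finally show ?case using insert by simp
qed auto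

lemma one_plus_pow_le_linear:
  fixes D :: real
  assumes "0 \<le> D" "real n * D \<le> 1/2"
  shows "(1 + D) ^ n \<le> 1 + 2 * (real n * D)"
proof -
  have "(1 + D) ^ n \<le> exp D ^ n" using assms(1) exp_ge_add_one_self[of D] by (intro power_mono) auto
  also have "\<dots> = exp (real n * D)" by (simp add: exp_of_nat_mult)
  also have "\<dots> \<le> 1 + 2 * (real n * D)" using assms by (intro real_exp_bound_lemma) auto
  finally show ?thesis .
qed

definition weighted_variance :: "('b \<Rightarrow> real) \<Rightarrow> 'b set \<Rightarrow> ('b \<Rightarrow> real) \<Rightarrow> real" where
  "weighted_variance p \<Omega> f = (\<Sum>x\<in>\<Omega>. p x * (f x - (\<Sum>y\<in>\<Omega>. p y * f y))\<^sup>2)"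

lemma weighted_variance_le:
  assumes "(\<Sum>x\<in>\<Omega>. p x) = 1"
  shows "weighted_variance p \<Omega> f \<le> (\<Sum>x\<in>\<Omega>. p x * (f x - c)\<^sup>2)"
proof -
  define m where "m = (\<Sum>y\<in>\<Omega>. p y * f y)"
  have "p x * (f x - c)\<^sup>2 = p x * (f x - m)\<^sup>2 + 2 * (m - c) * (p x * f x) - 2 * (m - c) * m * p x + (m - c)\<^sup>2 * p x"
    for x by (simp add: algebra_simps power2_eq_square)
  then have "(\<Sum>x\<in>\<Omega>. p x * (f x - c)\<^sup>2) = weighted_variance p \<Omega> f + (m - c)\<^sup>2"
    using assms by (simp add: weighted_variance_def m_def[symmetric] sum.distrib sum_subtractf
        flip: sum_distrib_left)
  then show ?thesis by simp
qed

lemma weighted_variance_reindex: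
  assumes "inj_on g A" "\<And>x. x \<in> A \<Longrightarrow> p (g x) = p' x" "\<And>x. x \<in> A \<Longrightarrow> f (g x) = f' x"
  shows "weighted_variance p (g ` A) f = weighted_variance p' A f'"
  unfolding weighted_variance_def sum.reindex[OF assms(1)] using assms(2,3) by (simp cong: sum.cong)

section \<open>Consequences of the uniqueness condition\<close>

lemma uniqueness_threshold_le:
  fixes \<Delta> :: nat
  assumes "3 \<le> \<Delta>"
  shows "(real \<Delta> - 1) ^ (\<Delta> - 1) / (real \<Delta> - 2) ^ \<Delta> \<le> exp 2 / (real \<Delta> - 2)"
proof -
  obtain k where k: "\<Delta> = Suc k" using assms by (cases \<Delta>) auto
  define r where "r = real k - 1"
  have r: "1 \<le> r" "real k = r + 1" using assms k by (simp_all add: r_def)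
  have "(real \<Delta> - 1) ^ (\<Delta> - 1) / (real \<Delta> - 2) ^ \<Delta> = (r + 1) ^ k / r ^ Suc k"
    by (simp add: k r_def algebra_simps)
  also have "\<dots> = ((r + 1) / r) ^ k / r" by (simp add: power_divide)
  also have "(r + 1) / r = 1 + 1 / r" using r(1) by (simp add: field_simps)
  also have "(1 + 1 / r) ^ k / r \<le> exp (1 / r) ^ k / r"
    using r(1) exp_ge_add_one_self[of "1 / r"] by (intro divide_right_mono power_mono) auto
  also have "exp (1 / r) ^ k = exp (1 + 1 / r)"
    using r by (simp add: exp_of_nat_mult[symmetric] field_simps)
  also have "exp (1 + 1 / r) / r \<le> exp 2 / r" using r(1) by (intro divide_right_mono) auto
  finally show ?thesis by (simp add: k r_def)
qed

lemma fugacity_le_of_uniqueness: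
  assumes "uniqueness V E lam \<eta>" "0 \<le> \<eta>" "3 \<le> max_degree V E" "v \<in> V"
  shows "lam v \<le> exp 2 / (real (max_degree V E) - 2)"
proof -
  let ?\<Delta> = "max_degree V E"
  let ?t = "(real ?\<Delta> - 1) ^ (?\<Delta> - 1) / (real ?\<Delta> - 2) ^ ?\<Delta>"
  have "lam v \<le> (1 - \<eta>) * ?t"
    using assms(1,4) unfolding uniqueness_def Let_def by (simp add: mult.assoc)
  also have "\<dots> \<le> ?t"
  proof -
    have le: "(1 - \<eta>) * t \<le> t" if "0 \<le> t" for t :: real
      using mult_nonneg_nonneg[OF assms(2) that] by (simp add: algebra_simps)
    show ?thesis by (rule le) (use assms(3) in simp)
  qed
  also have "\<dots> \<le> exp 2 / (real ?\<Delta> - 2)" by (rule uniqueness_threshold_le[OF assms(3)])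
  finally show ?thesis .
qed

lemma exp_two_le_nine: "exp 2 \<le> (9::real)"
proof -
  have "exp (2::real) = exp 1 * exp 1" by (simp flip: exp_add)
  also have "\<dots> \<le> 3 * 3" using exp_le by (intro mult_mono) auto
  finally show ?thesis by simp
qed

lemma fugacity_le_nine_of_uniqueness:
  assumes "uniqueness V E lam \<eta>" "0 \<le> \<eta>" "3 \<le> max_degree V E" "v \<in> V"
  shows "lam v \<le> 9"
proof -
  have "exp 2 / (real (max_degree V E) - 2) \<le> exp 2 / 1"
    using assms(3) by (intro divide_left_mono) auto
  then show ?thesis using fugacity_le_of_uniqueness[OF assms] exp_two_le_nine by simp
qed

lemma prod_neighbours_le_of_uniqueness:
  assumes "simple_graph V E" "uniqueness V E lam \<eta>" "0 \<le> \<eta>" "3 \<le> max_degree V E" "v \<in> V"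
    and "\<And>u. u \<in> V \<Longrightarrow> 0 \<le> lam u"
  shows "(\<Prod>u\<in>{u \<in> V. E v u}. 1 + lam u) \<le> exp 27"
proof -
  let ?\<Delta> = "max_degree V E" and ?N = "{u \<in> V. E v u}"
  let ?c = "exp 2 / (real ?\<Delta> - 2)"
  have "card ?N \<le> ?\<Delta>"
    using assms(1,5) unfolding max_degree_def degree_def simple_graph_def by (auto intro: Max_ge)
  have "(\<Prod>u\<in>?N. 1 + lam u) \<le> exp (\<Sum>u\<in>?N. lam u)"
    using assms(6) by (intro prod_le_exp_sum) auto
  also have "(\<Sum>u\<in>?N. lam u) \<le> real ?\<Delta> * ?c"
  proof -
    have "(\<Sum>u\<in>?N. lam u) \<le> real (card ?N) * ?c"
      using sum_mono[of ?N lam "\<lambda>_. ?c"] fugacity_le_of_uniqueness[OF assms(2-4)] by auto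
    also have "\<dots> \<le> real ?\<Delta> * ?c"
      using \<open>card ?N \<le> ?\<Delta>\<close> assms(4) by (intro mult_right_mono) auto
    finally show ?thesis .
  qed
  also have "real ?\<Delta> * ?c = exp 2 * (real ?\<Delta> / (real ?\<Delta> - 2))" by simp
  also have "\<dots> \<le> 9 * 3"
    using assms(4) exp_two_le_nine by (intro mult_mono) (auto simp: divide_le_eq)
  finally show ?thesis by simp
qed

section \<open>Fugacity distance versus total variation distance\<close>

lemma abs_ratio_diff_le:
  fixes p q p' q' \<alpha> \<beta> d M :: real
  assumes "p' = \<alpha> * p" "q' = \<beta> * q" "\<bar>p - q\<bar> \<le> 2 * d" "\<bar>p' - q'\<bar> \<le> 2 * d"
    and "0 \<le> \<beta>" "\<beta> \<le> 1" "0 < M" "1 / M \<le> p"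
  shows "\<bar>\<alpha> - \<beta>\<bar> \<le> 4 * M * d"
proof -
  have p: "0 < p" using assms(7,8) by (meson divide_pos_pos less_le_trans zero_less_one)
  have "(p' - q') + \<beta> * (q - p) = (\<alpha> - \<beta>) * p" using assms(1,2) by (simp add: algebra_simps)
  then have "\<bar>\<alpha> - \<beta>\<bar> * p = \<bar>(p' - q') + \<beta> * (q - p)\<bar>" using p by (simp add: abs_mult)
  also have "\<dots> \<le> \<bar>p' - q'\<bar> + \<beta> * \<bar>p - q\<bar>"
    using assms(5) abs_triangle_ineq[of "p' - q'" "\<beta> * (q - p)"] by (simp add: abs_mult abs_minus_commute)
  also have "\<dots> \<le> 2 * d + 1 * (2 * d)"
    using assms(3-6) by (intro add_mono mult_mono) auto
  finally have "\<bar>\<alpha> - \<beta>\<bar> * p \<le> 4 * d" by simp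
  then have "\<bar>\<alpha> - \<beta>\<bar> \<le> 4 * d * (1 / p)" using p by (simp add: le_divide_eq)
  also have "\<dots> \<le> 4 * d * M"
  proof (rule mult_left_mono)
    show "1 / p \<le> M" using assms(7,8) p by (simp add: field_simps)
    show "0 \<le> 4 * d" using assms(3) by simp
  qed
  finally show ?thesis by (simp add: mult_ac)
qed

lemma fugacity_diff_le_d_TV:
  assumes "simple_graph V E" "v \<in> V" "\<And>u. u \<in> V \<Longrightarrow> 0 < lmu u" "\<And>u. u \<in> V \<Longrightarrow> 0 < lnu u"
    and "lmu v \<le> L" "lnu v \<le> L" "(\<Prod>u\<in>{u \<in> V. E v u}. 1 + lmu u) \<le> M"
  shows "\<bar>lmu v - lnu v\<bar> \<le> 4 * M * (1 + L)\<^sup>2 * d_TV V (gibbs V E lmu) (gibbs V E lnu)"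
proof -
  define N where "N = {u \<in> V. E v u}"
  define d where "d = d_TV V (gibbs V E lmu) (gibbs V E lnu)"
  let ?free = "Pow (V - N)" and ?occ = "{A \<in> Pow (V - N). v \<in> A}"
  have fin: "finite V" using assms(1) by (simp add: simple_graph_def)
  have mu: "lmu v > 0" and nu: "lnu v > 0" using assms(2-4) by auto
  have ratio: "\<bar>lmu v / (1 + lmu v) - lnu v / (1 + lnu v)\<bar> \<le> 4 * M * d"
  proof (rule abs_ratio_diff_le)
    show "(\<Sum>A\<in>?occ. hc_prob V E lmu A) = lmu v / (1 + lmu v) * (\<Sum>A\<in>?free. hc_prob V E lmu A)"
      unfolding N_def using assms(1-3) by (intro hc_prob_occupied_avoiding_neighbours) (auto intro: less_imp_le)
    show "(\<Sum>A\<in>?occ. hc_prob V E lnu A) = lnu v / (1 + lnu v) * (\<Sum>A\<in>?free. hc_prob V E lnu A)"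
      unfolding N_def using assms(1,2,4) by (intro hc_prob_occupied_avoiding_neighbours) (auto intro: less_imp_le)
    show "\<bar>(\<Sum>A\<in>?free. hc_prob V E lmu A) - (\<Sum>A\<in>?free. hc_prob V E lnu A)\<bar> \<le> 2 * d"
      "\<bar>(\<Sum>A\<in>?occ. hc_prob V E lmu A) - (\<Sum>A\<in>?occ. hc_prob V E lnu A)\<bar> \<le> 2 * d"
      unfolding d_def using fin by (auto intro: abs_sum_hc_prob_diff_le_d_TV)
    have "0 < (\<Prod>u\<in>N. 1 + lmu u)" using assms(3) by (intro prod_pos) (auto simp: N_def add_pos_pos)
    then show "0 < M" using assms(7) N_def by simp
    have "1 / M \<le> 1 / (\<Prod>u\<in>N. 1 + lmu u)"
      using \<open>0 < (\<Prod>u\<in>N. 1 + lmu u)\<close> assms(7) N_def by (simp add: frac_le)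
    also have "\<dots> \<le> (\<Sum>A\<in>?free. hc_prob V E lmu A)"
      using fin assms(3) by (intro hc_prob_avoiding_ge) (auto simp: N_def intro: less_imp_le)
    finally show "1 / M \<le> (\<Sum>A\<in>?free. hc_prob V E lmu A)" .
  qed (use nu in auto)
  have "\<bar>lmu v - lnu v\<bar> = \<bar>lmu v / (1 + lmu v) - lnu v / (1 + lnu v)\<bar> * ((1 + lmu v) * (1 + lnu v))"
  proof -
    have "lmu v / (1 + lmu v) - lnu v / (1 + lnu v) = (lmu v - lnu v) / ((1 + lmu v) * (1 + lnu v))"
      using mu nu by (simp add: field_simps)
    then show ?thesis using mu nu by (simp add: abs_divide)
  qed
  also have "\<dots> \<le> (4 * M * d) * (1 + L)\<^sup>2"
  proof (rule mult_mono[OF ratio])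
    show "(1 + lmu v) * (1 + lnu v) \<le> (1 + L)\<^sup>2"
      unfolding power2_eq_square using mu nu assms(5,6) by (intro mult_mono) auto
  qed (use ratio mu nu in auto)
  finally show ?thesis by (simp add: d_def mult_ac)
qed

lemma d_par_le_d_TV:
  assumes "simple_graph V E" "V \<noteq> {}" "3 \<le> max_degree V E" "0 \<le> \<eta>"
    and "\<And>v. v \<in> V \<Longrightarrow> 0 < lmu v" "\<And>v. v \<in> V \<Longrightarrow> 0 < lnu v"
    and "uniqueness V E lmu \<eta>" "uniqueness V E lnu \<eta>"
  shows "d_par V lmu lnu \<le> 400 * exp 27 * d_TV V (gibbs V E lmu) (gibbs V E lnu)"
proof -
  have "d_par V lmu lnu \<in> (\<lambda>v. \<bar>lmu v - lnu v\<bar>) ` V"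
    unfolding d_par_def using assms(1,2) by (intro Max_in) (auto simp: simple_graph_def)
  then obtain v where v: "v \<in> V" "d_par V lmu lnu = \<bar>lmu v - lnu v\<bar>" by blast
  have "\<bar>lmu v - lnu v\<bar> \<le> 4 * exp 27 * (1 + 9)\<^sup>2 * d_TV V (gibbs V E lmu) (gibbs V E lnu)"
  proof (rule fugacity_diff_le_d_TV[OF assms(1) v(1) assms(5,6)])
    show "lmu v \<le> 9" "lnu v \<le> 9"
      using assms(3,4,7,8) v(1) by (auto intro: fugacity_le_nine_of_uniqueness)
    show "(\<Prod>u\<in>{u \<in> V. E v u}. 1 + lmu u) \<le> exp 27"
      using assms(1,3-5,7) v(1) by (intro prod_neighbours_le_of_uniqueness) (auto intro: less_imp_le)
  qed
  then show ?thesis using v(2) by simp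
qed

section \<open>Two hardcore models with close fugacities\<close>

definition common_support ::
    "'a set \<Rightarrow> (('a \<Rightarrow> int) \<Rightarrow> real) \<Rightarrow> (('a \<Rightarrow> int) \<Rightarrow> real) \<Rightarrow> 'a set \<Rightarrow> ('a \<Rightarrow> int) set" where
  "common_support V p q B = {x \<in> configs B. 0 < marginal V p B x \<and> 0 < marginal V q B x}"

definition cond_discrepancy ::
    "'a set \<Rightarrow> (('a \<Rightarrow> int) \<Rightarrow> real) \<Rightarrow> (('a \<Rightarrow> int) \<Rightarrow> real) \<Rightarrow> 'a set \<Rightarrow> ('a \<Rightarrow> int) \<Rightarrow> real" where
  "cond_discrepancy V p q B x = (1/2) * (\<Sum>y\<in>configs (V - B).
     \<bar>marginal V q B x / marginal V p B x * conditional V q B x y - conditional V p B x y\<bar>)"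

locale close_hardcore_pair =
  fixes V :: "'a set" and E :: "'a \<Rightarrow> 'a \<Rightarrow> bool" and lmu lnu :: "'a \<Rightarrow> real"
    and B :: "'a set" and \<kappa> D :: real
  assumes finite_V: "finite V" and B_subset: "B \<subseteq> V"
    and lmu_pos: "\<And>v. v \<in> V \<Longrightarrow> 0 < lmu v" and lnu_pos: "\<And>v. v \<in> V \<Longrightarrow> 0 < lnu v"
    and kappa_le_lmu: "\<And>v. v \<in> B \<Longrightarrow> \<kappa> \<le> lmu v" and kappa_pos: "0 < \<kappa>" and kappa_le_one: "\<kappa> \<le> 1"
    and fugacity_diff_le: "\<And>v. v \<in> V \<Longrightarrow> \<bar>lmu v - lnu v\<bar> \<le> D" and D_nonneg: "0 \<le> D"
    and card_mult_D_le: "real (card V) * D \<le> \<kappa> / 10"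
begin

abbreviation "n \<equiv> real (card V)"
abbreviation "\<mu> \<equiv> hc_prob V E lmu"
abbreviation "\<nu> \<equiv> hc_prob V E lnu"
abbreviation "\<mu>B \<equiv> hc_marginal V E lmu B"
abbreviation "\<nu>B \<equiv> hc_marginal V E lnu B"

text \<open>In the notation of the statement, \<open>\<mu>B X\<close> is \<open>\<mu>_B\<close> at the configuration on \<open>B\<close> with
  occupied set \<open>X\<close>, \<open>Omega\<close> encodes \<open>\<Omega>_B\<close>, and \<open>discrepancy\<close> is \<open>f\<close>.\<close>

definition "Z_ratio = hc_Z V E lmu / hc_Z V E lnu"
definition "rho v = lnu v / lmu v"
definition "rho_dev X = (\<Sum>v\<in>X. \<bar>rho v - 1\<bar>)"
definition "Omega = {X \<in> Pow B. 0 < \<mu>B X \<and> 0 < \<nu>B X}"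
definition "discrepancy X = cond_discrepancy V (gibbs V E lmu) (gibbs V E lnu) B (config_of B X)"

lemma lmu_nonneg: "v \<in> V \<Longrightarrow> 0 \<le> lmu v"
  using lmu_pos by (simp add: less_imp_le)

lemma lnu_nonneg: "v \<in> V \<Longrightarrow> 0 \<le> lnu v"
  using lnu_pos by (simp add: less_imp_le)

lemma lmu_le_lnu_plus_D: "v \<in> V \<Longrightarrow> lmu v \<le> lnu v + D"
  using fugacity_diff_le[of v] by (simp add: abs_le_iff)

lemma lnu_le_lmu_plus_D: "v \<in> V \<Longrightarrow> lnu v \<le> lmu v + D"
  using fugacity_diff_le[of v] by (simp add: abs_le_iff)

lemma card_mult_D_le_tenth: "n * D \<le> 1/10"
  using card_mult_D_le kappa_le_one by linarith

lemma one_plus_D_pow_le: "k \<le> card V \<Longrightarrow> (1 + D) ^ k \<le> 1 + 2 * (n * D)"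
proof -
  assume "k \<le> card V"
  then have "(1 + D) ^ k \<le> (1 + D) ^ card V" using D_nonneg by (intro power_increasing) auto
  also have "\<dots> \<le> 1 + 2 * (n * D)"
    using D_nonneg card_mult_D_le_tenth by (intro one_plus_pow_le_linear) auto
  finally show ?thesis .
qed

lemma hc_Z_lmu_pos: "0 < hc_Z V E lmu"
  by (simp add: hc_Z_pos finite_V lmu_nonneg)

lemma hc_Z_lnu_pos: "0 < hc_Z V E lnu"
  by (simp add: hc_Z_pos finite_V lnu_nonneg)

lemma mu_nonneg: "A \<subseteq> V \<Longrightarrow> 0 \<le> \<mu> A"
  by (simp add: hc_prob_nonneg finite_V lmu_nonneg)

lemma marginal_nonneg: "X \<subseteq> B \<Longrightarrow> 0 \<le> \<mu>B X"
  unfolding hc_marginal_def using B_subset by (intro sum_nonneg mu_nonneg) auto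

lemma Z_ratio_pos: "0 < Z_ratio"
  unfolding Z_ratio_def using hc_Z_lmu_pos hc_Z_lnu_pos by simp

lemma Z_ratio_le: "Z_ratio \<le> 1 + 2 * (n * D)"
proof -
  have "(\<Sum>Y\<in>Pow V. indep_weight E lmu ({} \<union> Y)) \<le> (1 + D) ^ card V * (\<Sum>Y\<in>Pow V. indep_weight E lnu ({} \<union> Y))"
    using finite_V D_nonneg lmu_nonneg lnu_nonneg lmu_le_lnu_plus_D
    by (intro sum_indep_weight_increase_le) auto
  also have "(1 + D) ^ card V \<le> 1 + 2 * (n * D)" by (rule one_plus_D_pow_le) simp
  finally have "hc_Z V E lmu \<le> (1 + 2 * (n * D)) * hc_Z V E lnu"
    using hc_Z_lnu_pos
    by (simp add: hc_Z_eq_sum_indep_weight mult_right_mono)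
  then show ?thesis
    unfolding Z_ratio_def using hc_Z_lnu_pos by (simp add: divide_le_eq)
qed

lemma nu_eq: "A \<subseteq> V \<Longrightarrow> \<nu> A = Z_ratio * \<mu> A * prod rho A"
proof -
  assume A: "A \<subseteq> V"
  have "indep_weight E lmu ({} \<union> A) * (\<Prod>v\<in>A. lnu v / lmu v) = indep_weight E lnu ({} \<union> A)"
    using A finite_subset[OF A finite_V] lmu_pos by (intro indep_weight_reweight) force+
  then show ?thesis
    using hc_Z_lmu_pos
    by (simp add: hc_prob_def Z_ratio_def rho_def field_simps)
qed

text \<open>The left-hand side is the weight of the fibre \<open>{A. A \<inter> B = X}\<close> after replacing the
  fugacities on \<open>V - B\<close> by \<open>h\<close>, normalised by the partition function of \<open>lmu\<close>.\<close>
lemma sum_mu_reweight_le: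
  assumes X: "X \<subseteq> B" and h: "\<And>v. v \<in> V - B \<Longrightarrow> 0 \<le> h v \<and> h v \<le> lmu v + D"
  shows "(\<Sum>Y\<in>Pow (V - B). \<mu> (X \<union> Y) * (\<Prod>v\<in>Y. h v / lmu v)) \<le> (1 + 2 * (n * D)) * \<mu>B X"
proof -
  define lam' where "lam' v = (if v \<in> V - B then h v else lmu v)" for v
  have fin: "finite X" "finite (V - B)" using X B_subset finite_V by (auto intro: finite_subset)
  have reweight: "\<mu> (X \<union> Y) * (\<Prod>v\<in>Y. h v / lmu v) = indep_weight E lam' (X \<union> Y) / hc_Z V E lmu"
    if "Y \<in> Pow (V - B)" for Y
  proof -
    have "indep_weight E lmu (X \<union> Y) * (\<Prod>v\<in>Y. h v / lmu v) = indep_weight E lam' (X \<union> Y)"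
      using that X fin lmu_pos by (intro indep_weight_reweight) (auto simp: lam'_def intro: finite_subset dest: less_imp_neq[symmetric])
    then show ?thesis by (simp add: hc_prob_def)
  qed
  let ?S = "\<Sum>Y\<in>Pow (V - B). indep_weight E lmu (X \<union> Y)"
  have "0 \<le> ?S" using X B_subset lmu_nonneg by (intro sum_nonneg indep_weight_nonneg) auto
  have "(\<Sum>Y\<in>Pow (V - B). indep_weight E lam' (X \<union> Y)) \<le> (1 + D) ^ card (V - B) * ?S"
    using fin X B_subset D_nonneg h lmu_nonneg
    by (intro sum_indep_weight_increase_le) (auto simp: lam'_def)
  also have "\<dots> \<le> (1 + 2 * (n * D)) * ?S"
    using finite_V \<open>0 \<le> ?S\<close> by (intro mult_right_mono one_plus_D_pow_le card_mono) auto
  finally have increase: "(\<Sum>Y\<in>Pow (V - B). indep_weight E lam' (X \<union> Y)) \<le> (1 + 2 * (n * D)) * ?S" .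
  have "(\<Sum>Y\<in>Pow (V - B). \<mu> (X \<union> Y) * (\<Prod>v\<in>Y. h v / lmu v))
      = (\<Sum>Y\<in>Pow (V - B). indep_weight E lam' (X \<union> Y)) / hc_Z V E lmu"
    unfolding sum_divide_distrib by (rule sum.cong[OF refl reweight])
  also have "\<dots> \<le> (1 + 2 * (n * D)) * ?S / hc_Z V E lmu"
    using increase hc_Z_lmu_pos by (intro divide_right_mono) auto
  also have "\<dots> = (1 + 2 * (n * D)) * \<mu>B X"
    by (simp add: hc_marginal_def hc_prob_def times_divide_eq_right flip: sum_divide_distrib)
  finally show ?thesis .
qed

lemma sum_mu_prod_rho_le:
  "X \<subseteq> B \<Longrightarrow> (\<Sum>Y\<in>Pow (V - B). \<mu> (X \<union> Y) * prod rho Y) \<le> (1 + 2 * (n * D)) * \<mu>B X"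
  using sum_mu_reweight_le[of X lnu] lnu_nonneg lnu_le_lmu_plus_D by (simp add: rho_def)

text \<open>After \<open>abs_prod_one_plus_sub_one_le\<close>, this is \<open>sum_mu_reweight_le\<close> with
  \<open>h = lmu + \<bar>lnu - lmu\<bar>\<close>, because \<open>1 + \<bar>rho v - 1\<bar> = h v / lmu v\<close>.\<close>
lemma sum_mu_abs_prod_rho_sub_one_le:
  assumes X: "X \<subseteq> B"
  shows "(\<Sum>Y\<in>Pow (V - B). \<mu> (X \<union> Y) * \<bar>prod rho Y - 1\<bar>) \<le> 2 * (n * D) * \<mu>B X"
proof -
  have one_plus: "1 + \<bar>rho v - 1\<bar> = (lmu v + \<bar>lnu v - lmu v\<bar>) / lmu v" if "v \<in> V" for v
    using lmu_pos[OF that] by (simp add: rho_def field_simps abs_divide flip: abs_minus_commute)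
  have prod_eq: "(\<Prod>v\<in>Y. 1 + \<bar>rho v - 1\<bar>) = (\<Prod>v\<in>Y. (lmu v + \<bar>lnu v - lmu v\<bar>) / lmu v)"
    if "Y \<in> Pow (V - B)" for Y
    using that by (intro prod.cong refl one_plus) auto
  have "(\<Sum>Y\<in>Pow (V - B). \<mu> (X \<union> Y) * \<bar>prod rho Y - 1\<bar>)
      \<le> (\<Sum>Y\<in>Pow (V - B). \<mu> (X \<union> Y) * ((\<Prod>v\<in>Y. 1 + \<bar>rho v - 1\<bar>) - 1))"
    using abs_prod_one_plus_sub_one_le[of "\<lambda>v. rho v - 1"] X B_subset
    by (intro sum_mono mult_left_mono mu_nonneg) auto
  also have "\<dots> = (\<Sum>Y\<in>Pow (V - B). \<mu> (X \<union> Y) * (\<Prod>v\<in>Y. (lmu v + \<bar>lnu v - lmu v\<bar>) / lmu v)) - \<mu>B X"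
  proof -
    have "(\<Sum>Y\<in>Pow (V - B). \<mu> (X \<union> Y) * ((\<Prod>v\<in>Y. 1 + \<bar>rho v - 1\<bar>) - 1))
        = (\<Sum>Y\<in>Pow (V - B). \<mu> (X \<union> Y) * (\<Prod>v\<in>Y. (lmu v + \<bar>lnu v - lmu v\<bar>) / lmu v) - \<mu> (X \<union> Y))"
      by (rule sum.cong) (simp_all add: prod_eq right_diff_distrib)
    then show ?thesis by (simp add: sum_subtractf hc_marginal_def)
  qed
  also have "\<dots> \<le> (1 + 2 * (n * D)) * \<mu>B X - \<mu>B X"
  proof -
    have "\<bar>lnu v - lmu v\<bar> \<le> D" if "v \<in> V - B" for v
      using fugacity_diff_le[of v] that by (simp add: abs_minus_commute)
    then have "(\<Sum>Y\<in>Pow (V - B). \<mu> (X \<union> Y) * (\<Prod>v\<in>Y. (lmu v + \<bar>lnu v - lmu v\<bar>) / lmu v))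
        \<le> (1 + 2 * (n * D)) * \<mu>B X"
      using lmu_nonneg by (intro sum_mu_reweight_le[OF X]) force
    then show ?thesis by simp
  qed
  finally show ?thesis by (simp add: algebra_simps)
qed

lemma rho_dev_nonneg: "0 \<le> rho_dev X"
  unfolding rho_dev_def by (simp add: sum_nonneg)

lemma rho_dev_le: "X \<subseteq> B \<Longrightarrow> rho_dev X \<le> 1/10"
proof -
  assume X: "X \<subseteq> B"
  have "\<bar>rho v - 1\<bar> \<le> D / \<kappa>" if "v \<in> X" for v
  proof -
    have v: "v \<in> B" "v \<in> V" using that X B_subset by auto
    have "\<bar>rho v - 1\<bar> = \<bar>lnu v - lmu v\<bar> / lmu v"
      using lmu_pos[OF v(2)] by (simp add: rho_def field_simps abs_divide)
    also have "\<dots> \<le> D / \<kappa>"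
      using fugacity_diff_le[OF v(2)] kappa_le_lmu[OF v(1)] kappa_pos D_nonneg
      by (intro frac_le) (auto simp: abs_minus_commute)
    finally show ?thesis .
  qed
  then have "rho_dev X \<le> real (card X) * (D / \<kappa>)"
    unfolding rho_dev_def using sum_mono[of X "\<lambda>v. \<bar>rho v - 1\<bar>" "\<lambda>_. D / \<kappa>"] by simp
  also have "\<dots> \<le> n * (D / \<kappa>)"
    using X B_subset finite_V D_nonneg kappa_pos
    by (intro mult_right_mono) (auto intro: card_mono)
  also have "\<dots> \<le> 1/10" using card_mult_D_le kappa_pos by (simp add: divide_le_eq)
  finally show ?thesis .
qed

lemma abs_prod_rho_sub_one_le: "X \<subseteq> B \<Longrightarrow> \<bar>prod rho X - 1\<bar> \<le> 2 * rho_dev X"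
proof -
  assume X: "X \<subseteq> B"
  have "\<bar>prod rho X - 1\<bar> \<le> (\<Prod>v\<in>X. 1 + \<bar>rho v - 1\<bar>) - 1"
    using abs_prod_one_plus_sub_one_le[of "\<lambda>v. rho v - 1" X] by simp
  also have "\<dots> \<le> exp (rho_dev X) - 1"
    unfolding rho_dev_def using prod_le_exp_sum[of X "\<lambda>v. \<bar>rho v - 1\<bar>"] by simp
  also have "\<dots> \<le> 2 * rho_dev X"
    using real_exp_bound_lemma[of "rho_dev X"] rho_dev_le[OF X] rho_dev_nonneg by simp
  finally show ?thesis .
qed

lemma discrepancy_eq:
  assumes "X \<in> Omega"
  shows "discrepancy X = (\<Sum>Y\<in>Pow (V - B). \<bar>\<nu> (X \<union> Y) - \<mu> (X \<union> Y)\<bar>) / (2 * \<mu>B X)"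
proof -
  have X: "X \<subseteq> B" "0 < \<mu>B X" "0 < \<nu>B X" using assms by (auto simp: Omega_def)
  have frac: "\<bar>a / \<mu>B X - b / \<mu>B X\<bar> = \<bar>a - b\<bar> / \<mu>B X" for a b
    using X by (simp add: abs_divide flip: diff_divide_distrib)
  have "discrepancy X = (1/2) * (\<Sum>Y\<in>Pow (V - B). \<bar>\<nu> (X \<union> Y) - \<mu> (X \<union> Y)\<bar> / \<mu>B X)"
    unfolding discrepancy_def cond_discrepancy_def sum_configs_eq_sum_Pow
    using X B_subset
    by (intro arg_cong[where f = "\<lambda>s. (1/2) * s"] sum.cong refl)
      (simp add: marginal_gibbs_config_of conditional_gibbs_config_of frac)
  then show ?thesis by (simp add: sum_divide_distrib mult.commute)
qed

text \<open>Writing \<open>\<nu> (X \<union> Y) = Z_ratio * \<mu> (X \<union> Y) * prod rho X * prod rho Y\<close>, the deviation is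
  controlled by \<open>\<bar>Z_ratio * prod rho (X \<union> Y) - Z_ratio\<bar>\<close>.\<close>
lemma abs_term_deviation_le:
  assumes X: "X \<subseteq> B" and Y: "Y \<subseteq> V - B"
  shows "\<bar>\<bar>\<nu> (X \<union> Y) - \<mu> (X \<union> Y)\<bar> - \<mu> (X \<union> Y) * \<bar>Z_ratio - 1\<bar>\<bar>
     \<le> Z_ratio * (\<bar>prod rho X - 1\<bar> * (\<mu> (X \<union> Y) * prod rho Y) + \<mu> (X \<union> Y) * \<bar>prod rho Y - 1\<bar>)"
proof -
  let ?A = "X \<union> Y" and ?t = Z_ratio and ?PX = "prod rho X" and ?PY = "prod rho Y"
  have A: "?A \<subseteq> V" using X Y B_subset by auto
  have PA: "prod rho ?A = ?PX * ?PY"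
    using X Y B_subset finite_V by (intro prod.union_disjoint) (auto intro: finite_subset)
  have PY: "0 \<le> ?PY"
    using Y lmu_pos lnu_pos by (intro prod_nonneg) (auto simp: rho_def intro!: divide_nonneg_pos less_imp_le)
  have m: "0 \<le> \<mu> ?A" and t: "0 < ?t" using mu_nonneg[OF A] Z_ratio_pos .
  have "\<nu> ?A - \<mu> ?A = \<mu> ?A * (?t * prod rho ?A - 1)" by (simp add: nu_eq[OF A] algebra_simps)
  then have "\<bar>\<nu> ?A - \<mu> ?A\<bar> = \<mu> ?A * \<bar>?t * prod rho ?A - 1\<bar>" using m by (simp add: abs_mult)
  then have "\<bar>\<bar>\<nu> ?A - \<mu> ?A\<bar> - \<mu> ?A * \<bar>?t - 1\<bar>\<bar> = \<mu> ?A * \<bar>\<bar>?t * prod rho ?A - 1\<bar> - \<bar>?t - 1\<bar>\<bar>"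
    using m by (simp add: abs_mult right_diff_distrib[symmetric])
  also have "\<dots> \<le> \<mu> ?A * (?t * (\<bar>?PX - 1\<bar> * ?PY + \<bar>?PY - 1\<bar>))"
  proof (rule mult_left_mono[OF _ m])
    have "\<bar>\<bar>?t * prod rho ?A - 1\<bar> - \<bar>?t - 1\<bar>\<bar> \<le> \<bar>(?t * prod rho ?A - 1) - (?t - 1)\<bar>"
      by (rule abs_triangle_ineq3)
    also have "(?t * prod rho ?A - 1) - (?t - 1) = ?t * ((?PX - 1) * ?PY + (?PY - 1))"
      by (simp add: PA algebra_simps)
    also have "\<bar>?t * ((?PX - 1) * ?PY + (?PY - 1))\<bar> \<le> ?t * (\<bar>?PX - 1\<bar> * ?PY + \<bar>?PY - 1\<bar>)"
      using t PY abs_triangle_ineq[of "(?PX - 1) * ?PY" "?PY - 1"] by (simp add: abs_mult)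
    finally show "\<bar>\<bar>?t * prod rho ?A - 1\<bar> - \<bar>?t - 1\<bar>\<bar> \<le> ?t * (\<bar>?PX - 1\<bar> * ?PY + \<bar>?PY - 1\<bar>)" .
  qed
  finally show ?thesis by (simp add: algebra_simps)
qed

lemma abs_discrepancy_sub_le:
  assumes "X \<in> Omega"
  shows "\<bar>discrepancy X - \<bar>Z_ratio - 1\<bar> / 2\<bar> \<le> 4 * rho_dev X + 2 * (n * D)"
proof -
  have X: "X \<subseteq> B" and m: "0 < \<mu>B X" using assms by (auto simp: Omega_def)
  let ?t = Z_ratio and ?q = "1 + 2 * (n * D)"
  let ?S1 = "\<Sum>Y\<in>Pow (V - B). \<bar>\<nu> (X \<union> Y) - \<mu> (X \<union> Y)\<bar>"
  let ?S2 = "\<Sum>Y\<in>Pow (V - B). \<mu> (X \<union> Y) * \<bar>?t - 1\<bar>"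
  have "\<bar>Z_ratio - 1\<bar> / 2 = ?S2 / (2 * \<mu>B X)"
    using m by (simp add: hc_marginal_def flip: sum_distrib_right)
  then have "\<bar>discrepancy X - \<bar>Z_ratio - 1\<bar> / 2\<bar> = \<bar>?S1 / (2 * \<mu>B X) - ?S2 / (2 * \<mu>B X)\<bar>"
    by (simp only: discrepancy_eq[OF assms])
  also have "\<dots> = \<bar>?S1 - ?S2\<bar> / (2 * \<mu>B X)"
    using m by (simp add: abs_divide flip: diff_divide_distrib)
  also have "\<dots> = \<bar>\<Sum>Y\<in>Pow (V - B). \<bar>\<nu> (X \<union> Y) - \<mu> (X \<union> Y)\<bar> - \<mu> (X \<union> Y) * \<bar>?t - 1\<bar>\<bar> / (2 * \<mu>B X)"
    by (simp add: sum_subtractf)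
  also have "\<dots> \<le> (\<Sum>Y\<in>Pow (V - B). ?t * (\<bar>prod rho X - 1\<bar> * (\<mu> (X \<union> Y) * prod rho Y)
      + \<mu> (X \<union> Y) * \<bar>prod rho Y - 1\<bar>)) / (2 * \<mu>B X)"
    using m X by (intro divide_right_mono order_trans[OF sum_abs sum_mono] abs_term_deviation_le) auto
  also have "\<dots> = ?t * (\<bar>prod rho X - 1\<bar> * (\<Sum>Y\<in>Pow (V - B). \<mu> (X \<union> Y) * prod rho Y)
      + (\<Sum>Y\<in>Pow (V - B). \<mu> (X \<union> Y) * \<bar>prod rho Y - 1\<bar>)) / (2 * \<mu>B X)"
    by (simp add: sum.distrib sum_distrib_left distrib_left)
  also have "\<dots> \<le> ?t * (\<bar>prod rho X - 1\<bar> * (?q * \<mu>B X) + 2 * (n * D) * \<mu>B X) / (2 * \<mu>B X)"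
    using m Z_ratio_pos
    by (intro divide_right_mono mult_left_mono add_mono sum_mu_prod_rho_le[OF X]
        sum_mu_abs_prod_rho_sub_one_le[OF X]) auto
  also have "\<dots> = ?t * (\<bar>prod rho X - 1\<bar> * ?q + 2 * (n * D)) / 2"
    using m by (simp add: field_simps)
  also have "\<dots> \<le> 2 * (2 * rho_dev X * 2 + 2 * (n * D)) / 2"
  proof (rule divide_right_mono[OF mult_mono])
    show "?t \<le> 2" using Z_ratio_le card_mult_D_le_tenth by simp
    have "\<bar>prod rho X - 1\<bar> * ?q \<le> 2 * rho_dev X * 2"
      using abs_prod_rho_sub_one_le[OF X] card_mult_D_le_tenth D_nonneg rho_dev_nonneg
      by (intro mult_mono) auto
    then show "\<bar>prod rho X - 1\<bar> * ?q + 2 * (n * D) \<le> 2 * rho_dev X * 2 + 2 * (n * D)" by simp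
  qed (use D_nonneg rho_dev_nonneg in auto)
  finally show ?thesis by simp
qed

lemma prob_pair_occupied_le:
  assumes "u \<in> V" "w \<in> V"
  shows "(\<Sum>A\<in>{A\<in>Pow V. {u, w} \<subseteq> A}. \<mu> A) \<le> prod lmu {u, w}"
proof -
  have "(\<Sum>A\<in>{A\<in>Pow V. {u, w} \<subseteq> A}. indep_weight E lmu A) \<le> prod lmu {u, w} * hc_Z V E lmu"
    using assms lmu_nonneg by (intro sum_indep_weight_supersets_le finite_V) auto
  then show ?thesis using hc_Z_lmu_pos by (simp add: hc_prob_def pos_divide_le_eq flip: sum_divide_distrib)
qed

text \<open>\<open>\<bar>rho u - 1\<bar> * lmu u = \<bar>lnu u - lmu u\<bar> \<le> D\<close>; only the diagonal keeps a factor \<open>1 / lmu u \<le> 1 / \<kappa>\<close>.\<close>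
lemma rho_dev_pair_le:
  assumes u: "u \<in> B" and w: "w \<in> B"
  shows "\<bar>rho u - 1\<bar> * \<bar>rho w - 1\<bar> * prod lmu {u, w} \<le> (if u = w then D\<^sup>2 / \<kappa> else 0) + D\<^sup>2"
proof -
  have scaled: "\<bar>rho v - 1\<bar> * lmu v \<le> D" if "v \<in> B" for v
  proof -
    have v: "v \<in> V" using that B_subset by auto
    have "\<bar>rho v - 1\<bar> * lmu v = \<bar>lnu v - lmu v\<bar>"
      using lmu_pos[OF v] by (simp add: rho_def abs_divide field_simps flip: abs_mult_pos)
    then show ?thesis using fugacity_diff_le[OF v] by (simp add: abs_minus_commute)
  qed
  show ?thesis
  proof (cases "u = w")
    case True
    have lu: "\<kappa> \<le> lmu u" "0 < lmu u" using kappa_le_lmu[OF u] kappa_pos by auto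
    have "\<bar>rho u - 1\<bar> * \<bar>rho w - 1\<bar> * prod lmu {u, w} = (\<bar>rho u - 1\<bar> * lmu u)\<^sup>2 / lmu u"
      using True lu by (simp add: power2_eq_square)
    also have "\<dots> \<le> D\<^sup>2 / \<kappa>"
      using scaled[OF u] lu kappa_pos by (intro frac_le power_mono) auto
    finally show ?thesis using True by (intro add_increasing2) simp_all
  next
    case False
    have "\<bar>rho u - 1\<bar> * \<bar>rho w - 1\<bar> * prod lmu {u, w} = (\<bar>rho u - 1\<bar> * lmu u) * (\<bar>rho w - 1\<bar> * lmu w)"
      using False by (simp add: algebra_simps)
    also have "\<dots> \<le> D * D"
      using scaled[OF u] scaled[OF w] u w B_subset lmu_nonneg D_nonneg by (intro mult_mono) auto
    finally show ?thesis using False by (simp add: power2_eq_square)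
  qed
qed

lemma second_moment_rho_dev: "(\<Sum>X\<in>Pow B. \<mu>B X * (rho_dev X)\<^sup>2) \<le> n * D\<^sup>2 / \<kappa> + n\<^sup>2 * D\<^sup>2"
proof -
  let ?w = "\<lambda>u. \<bar>rho u - 1\<bar>"
  have fin_B: "finite B" using B_subset finite_V by (rule finite_subset)
  have square: "(rho_dev (A \<inter> B))\<^sup>2 = (\<Sum>u\<in>B. \<Sum>w\<in>B. ?w u * ?w w * (if {u, w} \<subseteq> A then 1 else 0))" for A
  proof -
    have "rho_dev (A \<inter> B) = (\<Sum>u\<in>B. if u \<in> A then ?w u else 0)"
      unfolding rho_dev_def Int_commute[of A B] by (rule sum.inter_restrict[OF fin_B])
    moreover have "(if u \<in> A then ?w u else 0) * (if w \<in> A then ?w w else 0)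
        = ?w u * ?w w * (if {u, w} \<subseteq> A then 1 else 0)" for u w
      by auto
    ultimately show ?thesis by (simp only: power2_eq_square sum_product)
  qed
  have "(\<Sum>X\<in>Pow B. \<mu>B X * (rho_dev X)\<^sup>2) = (\<Sum>A\<in>Pow V. \<mu> A * (rho_dev (A \<inter> B))\<^sup>2)"
    by (rule sum_hc_marginal_mult[OF finite_V B_subset])
  also have "\<dots> = (\<Sum>A\<in>Pow V. \<Sum>u\<in>B. \<Sum>w\<in>B. ?w u * ?w w * (if {u, w} \<subseteq> A then \<mu> A else 0))"
    unfolding square sum_distrib_left by (intro sum.cong refl) auto
  also have "\<dots> = (\<Sum>u\<in>B. \<Sum>w\<in>B. ?w u * ?w w * (\<Sum>A\<in>Pow V. if {u, w} \<subseteq> A then \<mu> A else 0))"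
    by (simp only: sum.swap[of _ "Pow V"] sum_distrib_left)
  also have "\<dots> = (\<Sum>u\<in>B. \<Sum>w\<in>B. ?w u * ?w w * (\<Sum>A\<in>{A\<in>Pow V. {u, w} \<subseteq> A}. \<mu> A))"
    by (simp only: sum.inter_filter finite_Pow_iff finite_V)
  also have "\<dots> \<le> (\<Sum>u\<in>B. \<Sum>w\<in>B. (if u = w then D\<^sup>2 / \<kappa> else 0) + D\<^sup>2)"
  proof (intro sum_mono)
    fix u w assume "u \<in> B" "w \<in> B"
    then have "?w u * ?w w * (\<Sum>A\<in>{A\<in>Pow V. {u, w} \<subseteq> A}. \<mu> A) \<le> ?w u * ?w w * prod lmu {u, w}"
      using B_subset by (intro mult_left_mono prob_pair_occupied_le) auto
    also have "\<dots> \<le> (if u = w then D\<^sup>2 / \<kappa> else 0) + D\<^sup>2"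
      by (rule rho_dev_pair_le) fact+
    finally show "?w u * ?w w * (\<Sum>A\<in>{A\<in>Pow V. {u, w} \<subseteq> A}. \<mu> A) \<le> (if u = w then D\<^sup>2 / \<kappa> else 0) + D\<^sup>2" .
  qed
  also have "\<dots> = real (card B) * D\<^sup>2 / \<kappa> + (real (card B))\<^sup>2 * D\<^sup>2"
    using fin_B by (simp add: sum.distrib power2_eq_square algebra_simps add_divide_distrib)
  also have "\<dots> \<le> n * D\<^sup>2 / \<kappa> + n\<^sup>2 * D\<^sup>2"
    using card_mono[OF finite_V B_subset] kappa_pos
    by (intro add_mono divide_right_mono mult_right_mono power_mono) auto
  finally show ?thesis .
qed

lemma sum_Omega_marginal: "(\<Sum>X\<in>Omega. \<mu>B X) = 1"
proof -
  have nu_pos: "\<nu>B X > 0" if X: "X \<subseteq> B" and pos: "\<mu>B X > 0" for X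
  proof -
    obtain Y where Y: "Y \<in> Pow (V - B)" and "0 < \<mu> (X \<union> Y)"
      using pos sum_nonpos[of "Pow (V - B)" "\<lambda>Y. \<mu> (X \<union> Y)"] unfolding hc_marginal_def
      by (meson not_le)
    moreover have A: "X \<union> Y \<subseteq> V" using X Y B_subset by auto
    moreover have "0 < prod rho (X \<union> Y)"
      using A lmu_pos lnu_pos by (intro prod_pos) (auto simp: rho_def)
    ultimately have "0 < \<nu> (X \<union> Y)"
      using Z_ratio_pos by (simp add: nu_eq[OF A])
    also have "\<nu> (X \<union> Y) \<le> \<nu>B X"
      unfolding hc_marginal_def using Y X B_subset finite_V
      by (intro member_le_sum hc_prob_nonneg lnu_nonneg) auto
    finally show ?thesis .
  qed
  have "\<mu>B X = 0" if "X \<in> Pow B - Omega" for X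
  proof -
    have "X \<subseteq> B" "\<not> (0 < \<mu>B X \<and> 0 < \<nu>B X)" using that by (auto simp: Omega_def)
    then show ?thesis using nu_pos[of X] marginal_nonneg[of X] by force
  qed
  then have "(\<Sum>X\<in>Omega. \<mu>B X) = (\<Sum>X\<in>Pow B. \<mu>B X)"
    using finite_V B_subset by (intro sum.mono_neutral_left) (auto simp: Omega_def intro: finite_subset)
  also have "\<dots> = 1"
    using sum_hc_marginal_mult[OF finite_V B_subset, of E lmu "\<lambda>_. 1"] sum_hc_prob[OF finite_V] lmu_nonneg
    by simp
  finally show ?thesis .
qed

lemma variance_discrepancy_le: "weighted_variance \<mu>B Omega discrepancy \<le> 40 * D\<^sup>2 * (n / \<kappa> + n\<^sup>2)"
proof -
  have Omega: "Omega \<subseteq> Pow B" by (auto simp: Omega_def)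
  have "weighted_variance \<mu>B Omega discrepancy \<le> (\<Sum>X\<in>Omega. \<mu>B X * (discrepancy X - \<bar>Z_ratio - 1\<bar> / 2)\<^sup>2)"
    by (rule weighted_variance_le[OF sum_Omega_marginal])
  also have "\<dots> \<le> (\<Sum>X\<in>Omega. \<mu>B X * (32 * (rho_dev X)\<^sup>2 + 8 * (n * D)\<^sup>2))"
  proof (intro sum_mono mult_left_mono)
    fix X assume X: "X \<in> Omega"
    have "(discrepancy X - \<bar>Z_ratio - 1\<bar> / 2)\<^sup>2 \<le> (4 * rho_dev X + 2 * (n * D))\<^sup>2"
      using abs_discrepancy_sub_le[OF X] by (simp add: power_mono flip: abs_le_square_iff)
    also have "\<dots> \<le> 32 * (rho_dev X)\<^sup>2 + 8 * (n * D)\<^sup>2"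
      using sum_squares_ge_zero[of "4 * rho_dev X - 2 * (n * D)" 0] by (simp add: power2_eq_square algebra_simps)
    finally show "(discrepancy X - \<bar>Z_ratio - 1\<bar> / 2)\<^sup>2 \<le> 32 * (rho_dev X)\<^sup>2 + 8 * (n * D)\<^sup>2" .
    show "0 \<le> \<mu>B X" using X Omega by (intro marginal_nonneg) auto
  qed
  also have "\<dots> = 32 * (\<Sum>X\<in>Omega. \<mu>B X * (rho_dev X)\<^sup>2) + 8 * (n * D)\<^sup>2 * (\<Sum>X\<in>Omega. \<mu>B X)"
    unfolding distrib_left sum.distrib by (simp add: sum_distrib_left mult_ac)
  also have "(\<Sum>X\<in>Omega. \<mu>B X) = 1" by (rule sum_Omega_marginal)
  also have "(\<Sum>X\<in>Omega. \<mu>B X * (rho_dev X)\<^sup>2) \<le> (\<Sum>X\<in>Pow B. \<mu>B X * (rho_dev X)\<^sup>2)"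
    using Omega finite_V B_subset marginal_nonneg
    by (intro sum_mono2) (auto intro: finite_subset)
  also have "\<dots> \<le> n * D\<^sup>2 / \<kappa> + n\<^sup>2 * D\<^sup>2" by (rule second_moment_rho_dev)
  also have "32 * (n * D\<^sup>2 / \<kappa> + n\<^sup>2 * D\<^sup>2) + 8 * (n * D)\<^sup>2 * 1 \<le> 40 * D\<^sup>2 * (n / \<kappa> + n\<^sup>2)"
  proof -
    have key: "32 * (a + b) + 8 * b \<le> 40 * a + 40 * b" if "0 \<le> a" for a b :: real
      using that by (simp add: algebra_simps)
    have "(n * D)\<^sup>2 = n\<^sup>2 * D\<^sup>2" by (simp add: power_mult_distrib)
    moreover have "40 * D\<^sup>2 * (n / \<kappa> + n\<^sup>2) = 40 * (n * D\<^sup>2 / \<kappa>) + 40 * (n\<^sup>2 * D\<^sup>2)"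
      by (simp add: algebra_simps)
    ultimately show ?thesis using kappa_pos by (simp only: mult_1_right) (rule key, simp)
  qed
  finally show ?thesis by simp
qed

lemma common_support_eq: "common_support V (gibbs V E lmu) (gibbs V E lnu) B = config_of B ` Omega"
proof -
  have "common_support V (gibbs V E lmu) (gibbs V E lnu) B
      = config_of B ` {X \<in> Pow B. 0 < marginal V (gibbs V E lmu) B (config_of B X)
                                \<and> 0 < marginal V (gibbs V E lnu) B (config_of B X)}"
    unfolding common_support_def bij_betw_imp_surj_on[OF bij_betw_config_of, of B, symmetric] by blast
  also have "\<dots> = config_of B ` Omega"
    using B_subset by (auto simp: Omega_def marginal_gibbs_config_of intro!: image_cong Collect_cong)
  finally show ?thesis .
qed

lemma variance_cond_discrepancy_le:
  "weighted_variance (marginal V (gibbs V E lmu) B) (common_support V (gibbs V E lmu) (gibbs V E lnu) B)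
     (cond_discrepancy V (gibbs V E lmu) (gibbs V E lnu) B) \<le> 40 * D\<^sup>2 * (n / \<kappa> + n\<^sup>2)"
proof -
  have "inj_on (config_of B) Omega"
    by (rule inj_on_subset[OF bij_betw_imp_inj_on[OF bij_betw_config_of]]) (auto simp: Omega_def)
  then have "weighted_variance (marginal V (gibbs V E lmu) B) (config_of B ` Omega)
      (cond_discrepancy V (gibbs V E lmu) (gibbs V E lnu) B) = weighted_variance \<mu>B Omega discrepancy"
    using B_subset
    by (intro weighted_variance_reindex) (auto simp: Omega_def discrepancy_def marginal_gibbs_config_of)
  then show ?thesis using variance_discrepancy_le by (simp add: common_support_eq)
qed

end

lemma theta_eq_kappa_div:
  fixes n \<epsilon> :: real
  assumes "0 < n"
  shows "10 powr (-10) * \<epsilon> powr (1/4) / n powr (5/2) = (10 powr (-9) * \<epsilon> powr (1/4) / n powr (3/2)) / (10 * n)"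
proof -
  have "(10::real) powr (-10) = 10 powr (-9) / 10"
    using powr_add[of 10 "-9" "-1"] by (simp add: powr_minus_divide)
  moreover have "n powr (5/2) = n powr (3/2) * n"
    using powr_add[of n "3/2" 1] assms by simp
  moreover have "0 < n powr (3/2)" using assms by simp
  ultimately show ?thesis using assms by (simp only:) (simp add: field_simps)
qed

lemma mult_le_kappa_tenth_of_less_theta:
  fixes n D \<epsilon> :: real
  assumes "1 \<le> n" "D < 10 powr (-10) * \<epsilon> powr (1/4) / n powr (5/2)"
  shows "n * D \<le> 10 powr (-9) * \<epsilon> powr (1/4) / n powr (3/2) / 10"
proof -
  have "D < 10 powr (-9) * \<epsilon> powr (1/4) / n powr (3/2) / (10 * n)"
    using assms(2) unfolding theta_eq_kappa_div[OF order.strict_trans2[OF zero_less_one assms(1)]] .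
  then have "n * D < n * (10 powr (-9) * \<epsilon> powr (1/4) / n powr (3/2) / (10 * n))"
    using assms(1) by (intro mult_strict_left_mono) auto
  then show ?thesis using assms(1) by simp
qed

lemma threshold_kappa_le_one:
  fixes n \<epsilon> :: real
  assumes "1 \<le> n" "0 < \<epsilon>" "\<epsilon> < 1"
  shows "10 powr (-9) * \<epsilon> powr (1/4) / n powr (3/2) \<le> 1"
proof -
  have "1 \<le> (10::real) powr 9" by (rule ge_one_powr_ge_zero) auto
  then have "10 powr (-9) \<le> (1::real)" by (simp add: powr_minus inverse_le_1_iff)
  moreover have "\<epsilon> powr (1/4) \<le> 1" using assms(2,3) by (intro powr_le1) auto
  ultimately have "10 powr (-9) * \<epsilon> powr (1/4) \<le> (1::real) * 1" by (intro mult_mono) auto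
  also have "\<dots> \<le> n powr (3/2)" using assms(1) by (simp add: ge_one_powr_ge_zero)
  finally show ?thesis using assms(1) by (simp add: divide_le_eq)
qed

lemma cond_discrepancy_variance_bound:
  fixes V :: "'a set"
  assumes graph: "simple_graph V E" "3 \<le> max_degree V E"
    and eps: "0 < \<epsilon>" "\<epsilon> < 1" and eta: "0 \<le> \<eta>"
    and pos: "\<forall>v\<in>V. 0 < lmu v" "\<forall>v\<in>V. 0 < lnu v"
    and uniq: "uniqueness V E lmu \<eta>" "uniqueness V E lnu \<eta>"
    and close: "d_par V lmu lnu < 10 powr (-10) * \<epsilon> powr (1/4) / real (card V) powr (5/2)"
  defines "n \<equiv> real (card V)" and "\<kappa> \<equiv> 10 powr (-9) * \<epsilon> powr (1/4) / real (card V) powr (3/2)"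
    and "B \<equiv> {v \<in> V. 10 powr (-9) * \<epsilon> powr (1/4) / real (card V) powr (3/2) \<le> min (lmu v) (lnu v)}"
    and "\<mu> \<equiv> gibbs V E lmu" and "\<nu> \<equiv> gibbs V E lnu"
  shows "weighted_variance (marginal V \<mu> B) (common_support V \<mu> \<nu> B) (cond_discrepancy V \<mu> \<nu> B)
    \<le> 40 * (400 * exp 27)\<^sup>2 * (d_TV V \<mu> \<nu>)\<^sup>2 * (n ^ 3 + n / \<kappa>)"
proof (cases "V = {}")
  case True
  then interpret close_hardcore_pair V E lmu lnu B 1 0
    by unfold_locales (auto simp: B_def)
  show ?thesis using variance_cond_discrepancy_le True by (simp add: \<mu>_def \<nu>_def n_def)
next
  case False
  have fin: "finite V" using graph(1) by (simp add: simple_graph_def)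
  then have n: "1 \<le> n" using False by (simp add: n_def Suc_le_eq card_gt_0_iff)
  define D where "D = d_par V lmu lnu"
  have "n * D \<le> \<kappa> / 10"
    using close n unfolding D_def \<kappa>_def n_def[symmetric] by (rule mult_le_kappa_tenth_of_less_theta[rotated])
  moreover have "\<bar>lmu v - lnu v\<bar> \<le> D" if "v \<in> V" for v
    unfolding D_def d_par_def using fin that by (intro Max_ge) auto
  moreover have "0 < \<kappa>" using eps n by (simp add: \<kappa>_def n_def)
  moreover have "\<kappa> \<le> 1" unfolding \<kappa>_def n_def[symmetric] using eps n by (intro threshold_kappa_le_one)
  ultimately interpret close_hardcore_pair V E lmu lnu B \<kappa> D
    using fin pos False by unfold_locales (auto simp: B_def \<kappa>_def n_def intro: order_trans[OF abs_ge_zero])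
  have "D \<le> 400 * exp 27 * d_TV V \<mu> \<nu>"
    unfolding D_def \<mu>_def \<nu>_def using graph False eta pos uniq by (intro d_par_le_d_TV) auto
  then have "40 * D\<^sup>2 * (n / \<kappa> + n\<^sup>2) \<le> 40 * (400 * exp 27 * d_TV V \<mu> \<nu>)\<^sup>2 * (n / \<kappa> + n ^ 3)"
    using D_nonneg n kappa_pos by (intro mult_mono power_mono add_left_mono) (auto simp: power_increasing)
  with variance_cond_discrepancy_le show ?thesis
    by (simp add: \<mu>_def \<nu>_def n_def power_mult_distrib algebra_simps)
qed

theorem lemma5p4:
  "\<forall>\<eta>::real. 0 < \<eta> \<and> \<eta> < 1 \<longrightarrow>
   (\<exists>C::real. C > 0 \<and>
    (\<forall>(V::nat set) (E::nat \<Rightarrow> nat \<Rightarrow> bool) (lam\<mu>::nat \<Rightarrow> real) (lam\<nu>::nat \<Rightarrow> real) (\<epsilon>::real).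
       simple_graph V E \<and> max_degree V E \<ge> 3 \<and>
       0 < \<epsilon> \<and> \<epsilon> < 1 \<and>
       (\<forall>v\<in>V. 0 < lam\<mu> v) \<and> (\<forall>v\<in>V. 0 < lam\<nu> v) \<and>
       uniqueness V E lam\<mu> \<eta> \<and> uniqueness V E lam\<nu> \<eta> \<and>
       d_par V lam\<mu> lam\<nu> < 10 powr (-10) * \<epsilon> powr (1/4) / real (card V) powr (5/2)
       \<longrightarrow>
       (let n = real (card V);
            \<mu> = gibbs V E lam\<mu>;
            \<nu> = gibbs V E lam\<nu>;
            d = d_TV V \<mu> \<nu>;
            \<kappa> = 10 powr (-9) * \<epsilon> powr (1/4) / n powr (3/2);
            B = {v \<in> V. min (lam\<mu> v) (lam\<nu> v) \<ge> \<kappa>};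
            S = V - B;
            \<Omega> = {x \<in> configs B. marginal V \<mu> B x > 0 \<and> marginal V \<nu> B x > 0};
            f = (\<lambda>x. (1/2) * (\<Sum>y \<in> configs S.
                   \<bar>marginal V \<nu> B x / marginal V \<mu> B x * conditional V \<nu> B x y
                    - conditional V \<mu> B x y\<bar>));
            Ef = (\<Sum>x \<in> \<Omega>. marginal V \<mu> B x * f x);
            Var = (\<Sum>x \<in> \<Omega>. marginal V \<mu> B x * (f x - Ef)\<^sup>2)
        in Var \<le> C * d\<^sup>2 * (n ^ 3 + n / \<kappa>))))"
proof (intro allI impI exI[where x = "40 * (400 * exp 27)\<^sup>2"] conjI)
  show "(0::real) < 40 * (400 * exp 27)\<^sup>2" by simp
qed (unfold Let_def, elim conjE,
     rule cond_discrepancy_variance_bound[unfolded weighted_variance_def common_support_def cond_discrepancy_def],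
     simp_all)

end
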